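(* Let $m\ge 2$ be an integer such that $p_1(x)=x^{m+1}+x+1$ is irreducible over $\mathrm{GF}(2)$, and let $F=\mathrm{GF}(2^{m+1})=\mathrm{GF}(2)[x]/(p_1(x))$, whose elements are identified with the polynomials over $\mathrm{GF}(2)$ of degree at most $m$. Let $D_0$ be the multiplication table of $F$ (rows and columns indexed by the elements of $F$, entry in row $a$ and column $b$ equal to $ab$ computed in $F$). Let $D_1$ be the $2^{m+1}\times 4$ submatrix of $D_0$ consisting of the columns indexed by $0,1,x,x+1$, and let $D_2$ be the submatrix of $D_1$ consisting of the $2^m$ rows indexed by the elements of $r_{m-2}\cup\big(x^m+x^{m-1}+r_{m-2}\big)$. Then: (i) $D_1$ is a difference matrix $D(2^{m+1},2^2,2^{m+1})$ over the additive group of $F$; (ii) $\phi(D_2)$ is a difference matrix $D(2^m,2^2,2^m)$ over the additive group of $\mathrm{GF}(2^m)$.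
   Context: $r_{m-2}$ denotes the set of all polynomials over $\mathrm{GF}(2)$ of degree at most $m-2$, and $q+S=\{q+s:s\in S\}$. A difference matrix $D(b,c,g)$ over a finite abelian group $\mathcal{A}$ of order $g$ is a $b\times c$ array with entries in $\mathcal{A}$ such that, for any two distinct columns, their entrywise difference vector contains every element of $\mathcal{A}$ equally often. Elements of $\mathrm{GF}(2^m)$ are identified (as an additive group) with polynomials over $\mathrm{GF}(2)$ of degree at most $m-1$. The truncation projection $\phi$ maps $a_0+a_1x+\cdots+a_mx^m\in F$ to $a_0+a_1x+\cdots+a_{m-1}x^{m-1}$; for an array $D$, $\phi(D)$ is obtained by applying $\phi$ entrywise. *)

theory Defs
  imports "HOL-Library.Z2" "HOL-Computational_Algebra.Polynomial"
begin

text \<open>A difference matrix D(b,c,g): rows indexed by the finite set R (b rows),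
columns by the finite set C (c columns), entries in the finite additive group A
(a subgroup of the ambient additive group, of order g); for any two distinct
columns the difference vector contains every element of A equally often.\<close>
definition diff_matrix ::
  "'r set \<Rightarrow> 'c set \<Rightarrow> ('r \<Rightarrow> 'c \<Rightarrow> 'a::ab_group_add) \<Rightarrow> 'a set \<Rightarrow> nat \<Rightarrow> nat \<Rightarrow> nat \<Rightarrow> bool"
  where "diff_matrix R C D A b c g \<longleftrightarrow>
    finite R \<and> finite C \<and> finite A \<and> card R = b \<and> card C = c \<and> card A = g \<and>
    (\<forall>r\<in>R. \<forall>j\<in>C. D r j \<in> A) \<and>
    (\<forall>j\<in>C. \<forall>k\<in>C. j \<noteq> k \<longrightarrow>
       (\<forall>u\<in>A. \<forall>v\<in>A. card {r\<in>R. D r j - D r k = u} = card {r\<in>R. D r j - D r k = v}))"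

definition polys_upto :: "nat \<Rightarrow> bit poly set"
  where "polys_upto n = {p. degree p \<le> n}"

definition trunc_phi :: "nat \<Rightarrow> bit poly \<Rightarrow> bit poly"
  where "trunc_phi m p = (\<Sum>i<m. monom (coeff p i) i)"

definition p1 :: "nat \<Rightarrow> bit poly"
  where "p1 m = monom 1 (m + 1) + [:1, 1:]"

definition D0 :: "nat \<Rightarrow> bit poly \<Rightarrow> bit poly \<Rightarrow> bit poly"
  where "D0 m a b = (a * b) mod p1 m"

end

theory Submission
  imports Defs
begin

text \<open>For distinct columns \<open>j, k\<close> the difference column is \<open>a \<mapsto> a (j - k) mod p1\<close> with
\<open>j - k \<in> {1, x, x + 1}\<close>. Since \<open>p1(0) = p1(1) = 1\<close>, the factors \<open>x\<close> and \<open>x + 1\<close> can be cancelled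
modulo \<open>p1\<close>, so multiplication by \<open>j - k\<close> is injective on the residues, which gives (i).
For (ii), \<open>\<phi>\<close> vanishes on a residue only if it is \<open>0\<close> or \<open>x^m\<close>, so \<open>a \<mapsto> \<phi>(a d)\<close> is injective on
the rows of \<open>D2\<close> unless multiplication by \<open>d\<close> maps a difference of two rows to \<open>x^m\<close>. For
\<open>d = 1, x, x + 1\<close> the preimage of \<open>x^m\<close> is \<open>x^m, x^(m-1), x^m + 1\<close>, whose coefficients at
\<open>x^m\<close> and \<open>x^(m-1)\<close> differ, whereas they agree for every difference of two rows of \<open>D2\<close>.\<close>

lemma card_fiber_eq_1:
  assumes "bij_betw f R A" and "u \<in> A"
  shows "card {r\<in>R. f r = u} = 1"
proof -
  obtain r where r: "r \<in> R" "f r = u"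
    using assms unfolding bij_betw_def by blast
  then have "{r\<in>R. f r = u} = {r}"
    using assms(1) unfolding bij_betw_def inj_on_def by blast
  then show ?thesis by simp
qed

lemma diff_matrix_of_inj_on:
  assumes "finite R" "finite C" "finite A" "card R = card A"
    and "\<And>r j. r \<in> R \<Longrightarrow> j \<in> C \<Longrightarrow> D r j \<in> A"
    and diffs: "\<And>r j k. r \<in> R \<Longrightarrow> j \<in> C \<Longrightarrow> k \<in> C \<Longrightarrow> D r j - D r k \<in> A"
    and inj: "\<And>j k. j \<in> C \<Longrightarrow> k \<in> C \<Longrightarrow> j \<noteq> k \<Longrightarrow> inj_on (\<lambda>r. D r j - D r k) R"
  shows "diff_matrix R C D A (card R) (card C) (card A)"
  unfolding diff_matrix_def
proof (intro conjI ballI impI assms refl)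
  fix j k u v assume jk: "j \<in> C" "k \<in> C" "j \<noteq> k" and uv: "u \<in> A" "v \<in> A"
  let ?f = "\<lambda>r. D r j - D r k"
  have "?f ` R = A"
    using diffs jk inj[OF jk] assms(3,4) by (intro card_subset_eq) (auto simp: card_image)
  then have "bij_betw ?f R A" using inj[OF jk] by (rule bij_betw_imageI[rotated])
  then show "card {r\<in>R. ?f r = u} = card {r\<in>R. ?f r = v}"
    using uv by (simp add: card_fiber_eq_1)
qed

lemma dvd_mult_linear_cancel:
  fixes p t :: "'a::idom poly"
  assumes "poly p a \<noteq> 0" and "p dvd t * [:-a, 1:]"
  shows "p dvd t"
proof -
  obtain c where c: "t * [:-a, 1:] = p * c"
    using assms(2) by (auto elim: dvdE)
  have "poly p a * poly c a = 0"
    using arg_cong[OF c, of "\<lambda>q. poly q a"] by simp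
  then have "[:-a, 1:] dvd c"
    using assms(1) by (simp add: poly_eq_0_iff_dvd)
  then obtain c' where "c = [:-a, 1:] * c'" by (elim dvdE)
  with c have "t * [:-a, 1:] = (p * c') * [:-a, 1:]"
    by (simp only: mult.assoc mult.commute[of c'])
  moreover have "[:-a, 1:] \<noteq> 0" by simp
  ultimately have "t = p * c'" using mult_cancel_right by blast
  then show ?thesis by simp
qed

lemma inj_on_mult_mod:
  fixes p d :: "'a::field poly"
  assumes cancel: "\<And>t. p dvd t * d \<Longrightarrow> p dvd t"
  shows "inj_on (\<lambda>r. (r * d) mod p) {r. degree r < degree p}"
proof (rule inj_onI)
  fix r r' assume r: "r \<in> {r. degree r < degree p}" "r' \<in> {r. degree r < degree p}"
    and eq: "(r * d) mod p = (r' * d) mod p"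
  have "p dvd (r - r') * d"
    using eq by (simp add: mod_eq_0_iff_dvd[symmetric] poly_mod_diff_left left_diff_distrib)
  then have "p dvd r - r'" by (rule cancel)
  moreover have "degree (r - r') < degree p"
    using r degree_diff_le_max[of r r'] by simp
  ultimately show "r = r'"
    using dvd_imp_degree_le[of p "r - r'"] by force
qed

lemma polys_upto_Suc:
  "polys_upto (Suc n) = polys_upto n \<union> (\<lambda>q. monom 1 (Suc n) + q) ` polys_upto n"
proof (intro equalityI subsetI)
  fix p assume p: "p \<in> polys_upto (Suc n)"
  define q where "q = p - monom (coeff p (Suc n)) (Suc n)"
  have "degree q \<le> n"
    using p unfolding q_def polys_upto_def
    by (intro degree_le) (auto simp: coeff_monom intro: coeff_eq_0)
  moreover have "p = q \<or> p = monom 1 (Suc n) + q"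
    unfolding q_def by (cases "coeff p (Suc n)") auto
  ultimately show "p \<in> polys_upto n \<union> (\<lambda>q. monom 1 (Suc n) + q) ` polys_upto n"
    unfolding polys_upto_def by blast
qed (auto simp: polys_upto_def intro!: degree_add_le order.trans[OF degree_monom_le])

lemma polys_upto_0: "polys_upto 0 = {0, 1}"
proof (intro equalityI subsetI)
  fix p assume "p \<in> polys_upto 0"
  then have "p = [:coeff p 0:]"
    unfolding polys_upto_def by (simp add: degree_0_id[symmetric])
  then show "p \<in> {0, 1}"
    by (cases "coeff p 0") (auto simp: one_pCons)
qed (auto simp: polys_upto_def)

lemma finite_polys_upto [simp]: "finite (polys_upto n)"
  by (induction n) (simp_all add: polys_upto_0 polys_upto_Suc)

lemma card_polys_upto: "card (polys_upto n) = 2 ^ (n + 1)"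
proof (induction n)
  case 0
  then show ?case by (simp add: polys_upto_0)
next
  case (Suc n)
  let ?shift = "\<lambda>q. monom 1 (Suc n) + q"
  have "coeff (?shift q) (Suc n) \<noteq> coeff p (Suc n)"
    if "p \<in> polys_upto n" "q \<in> polys_upto n" for p q
    using that by (simp add: polys_upto_def coeff_eq_0)
  then have "polys_upto n \<inter> ?shift ` polys_upto n = {}"
    by blast
  moreover have "inj_on ?shift (polys_upto n)"
    by (simp add: inj_on_def)
  ultimately show ?case
    using Suc by (simp add: polys_upto_Suc card_Un_disjoint card_image)
qed

lemma polys_upto_1: "polys_upto 1 = {0, 1, [:0, 1:], [:1, 1:]}"
proof -
  have "monom (1::bit) 1 = [:0, 1:]"
    by (simp add: monom_Suc)
  then show ?thesis
    using polys_upto_Suc[of 0] by (auto simp: polys_upto_0 one_pCons)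
qed

lemma diff_in_polys_upto: "p \<in> polys_upto n \<Longrightarrow> q \<in> polys_upto n \<Longrightarrow> p - q \<in> polys_upto n"
  using degree_diff_le[of p n q] by (simp add: polys_upto_def)

lemma degree_p1: "m \<ge> 1 \<Longrightarrow> degree (p1 m) = m + 1"
  unfolding p1_def by (simp add: degree_add_eq_left degree_monom_eq)

lemma poly_p1 [simp]: "poly (p1 m) a = 1"
  by (cases a) (simp_all add: p1_def poly_monom)

lemma polys_upto_eq_degree_less_p1: "m \<ge> 1 \<Longrightarrow> polys_upto m = {r. degree r < degree (p1 m)}"
  by (auto simp: polys_upto_def degree_p1)

lemma mod_p1_in_polys_upto:
  assumes "m \<ge> 1"
  shows "q mod p1 m \<in> polys_upto m"
proof -
  have "p1 m \<noteq> 0"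
    using degree_p1[OF assms] by auto
  then show ?thesis
    using degree_mod_less[of "p1 m" q] degree_p1[OF assms] by (auto simp: polys_upto_def)
qed

lemma p1_dvd_mult_cancel:
  assumes "d \<in> polys_upto 1" "d \<noteq> 0" "p1 m dvd t * d"
  shows "p1 m dvd t"
proof -
  have "d = 1 \<or> d = [:-0, 1:] \<or> d = [:-1, 1:]"
    using assms(1,2) unfolding polys_upto_1 by simp
  moreover have "p1 m dvd t" if "d = [:-a, 1:]" for a
    using dvd_mult_linear_cancel[of "p1 m" a t] assms(3) unfolding that by simp
  ultimately show ?thesis
    using assms(3) by force
qed

lemma inj_on_mult_mod_p1:
  "m \<ge> 1 \<Longrightarrow> d \<in> polys_upto 1 \<Longrightarrow> d \<noteq> 0 \<Longrightarrow> inj_on (\<lambda>r. (r * d) mod p1 m) (polys_upto m)"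
  unfolding polys_upto_eq_degree_less_p1 by (rule inj_on_mult_mod) (rule p1_dvd_mult_cancel)

lemma D0_diff: "D0 m r j - D0 m r k = (r * (j - k)) mod p1 m"
  by (simp add: D0_def poly_mod_diff_left right_diff_distrib)

lemma diff_matrix_D1:
  assumes "m \<ge> 1"
  shows "diff_matrix (polys_upto m) (polys_upto 1) (D0 m) (polys_upto m)
           (2 ^ (m + 1)) (2 ^ 2) (2 ^ (m + 1))"
proof -
  have "diff_matrix (polys_upto m) (polys_upto 1) (D0 m) (polys_upto m)
          (card (polys_upto m)) (card (polys_upto 1)) (card (polys_upto m))"
  proof (rule diff_matrix_of_inj_on)
    fix r j k
    show "D0 m r j \<in> polys_upto m" "D0 m r j - D0 m r k \<in> polys_upto m"
      unfolding D0_diff unfolding D0_def using assms by (simp_all add: mod_p1_in_polys_upto)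
  next
    fix j k assume "j \<in> polys_upto 1" "k \<in> polys_upto 1" "j \<noteq> k"
    then show "inj_on (\<lambda>r. D0 m r j - D0 m r k) (polys_upto m)"
      unfolding D0_diff using assms by (intro inj_on_mult_mod_p1 diff_in_polys_upto) auto
  qed (simp_all add: card_polys_upto)
  then show ?thesis by (simp add: card_polys_upto)
qed

definition D2_rows :: "nat \<Rightarrow> bit poly set" where
  "D2_rows m = polys_upto (m - 2) \<union> (\<lambda>s. monom 1 m + monom 1 (m - 1) + s) ` polys_upto (m - 2)"

lemma D2_rowsD:
  assumes "m \<ge> 2" and "r \<in> D2_rows m"
  shows "r \<in> polys_upto m" and "coeff r m = coeff r (m - 1)"
proof -
  obtain s where s: "s \<in> polys_upto (m - 2)" and "r = s \<or> r = monom 1 m + monom 1 (m - 1) + s"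
    using assms(2) unfolding D2_rows_def by blast
  moreover have "coeff s m = 0" "coeff s (m - 1) = 0"
    using assms(1) s by (simp_all add: polys_upto_def coeff_eq_0)
  ultimately show "r \<in> polys_upto m" "coeff r m = coeff r (m - 1)"
    using assms(1)
    by (auto simp: polys_upto_def intro!: degree_add_le order.trans[OF degree_monom_le])
qed

lemma card_D2_rows:
  assumes "m \<ge> 2"
  shows "card (D2_rows m) = 2 ^ m"
proof -
  let ?shift = "\<lambda>s. monom 1 m + monom 1 (m - 1) + s"
  have "coeff (?shift t) m \<noteq> coeff s m" if "s \<in> polys_upto (m - 2)" "t \<in> polys_upto (m - 2)" for s t
    using that assms by (simp add: polys_upto_def coeff_eq_0)
  then have "polys_upto (m - 2) \<inter> ?shift ` polys_upto (m - 2) = {}"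
    by blast
  moreover have "inj_on ?shift (polys_upto (m - 2))"
    by (simp add: inj_on_def)
  moreover have "2 ^ (m - 2 + 1) + 2 ^ (m - 2 + 1) = (2::nat) ^ m"
    using assms by (cases m) (auto simp: Suc_diff_Suc numeral_2_eq_2)
  ultimately show ?thesis
    by (simp add: D2_rows_def card_Un_disjoint card_image card_polys_upto)
qed

lemma coeff_trunc_phi: "coeff (trunc_phi m p) i = (if i < m then coeff p i else 0)"
  by (simp add: trunc_phi_def coeff_sum coeff_monom)

lemma trunc_phi_diff: "trunc_phi m (p - q) = trunc_phi m p - trunc_phi m q"
  by (simp add: poly_eq_iff coeff_trunc_phi)

lemma trunc_phi_in_polys_upto: "m \<ge> 1 \<Longrightarrow> trunc_phi m p \<in> polys_upto (m - 1)"
  by (auto simp: polys_upto_def coeff_trunc_phi intro!: degree_le)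

lemma trunc_phi_eq_0D:
  assumes "p \<in> polys_upto m" and "trunc_phi m p = 0"
  shows "p = 0 \<or> p = monom 1 m"
proof -
  have "p = monom (coeff p m) m"
  proof (rule poly_eqI)
    fix i
    show "coeff p i = coeff (monom (coeff p m) m) i"
      using assms coeff_trunc_phi[of m p i] coeff_eq_0[of p i]
      by (cases i m rule: linorder_cases) (auto simp: polys_upto_def coeff_monom)
  qed
  then show ?thesis by (cases "coeff p m") auto
qed

lemma monom_preimage_mult_mod_p1:
  assumes m: "m \<ge> 2" and d: "d \<in> polys_upto 1" "d \<noteq> 0"
  obtains t where "t \<in> polys_upto m" "(t * d) mod p1 m = monom 1 m" "coeff t m \<noteq> coeff t (m - 1)"
proof -
  have monom_mod: "monom 1 m mod p1 m = monom 1 m"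
    using m degree_p1[of m] by (intro mod_poly_less) (simp add: degree_monom_eq)
  have x: "[:0, 1:] = monom (1::bit) 1"
    by (simp add: monom_Suc)
  consider "d = 1" | "d = [:0, 1:]" | "d = [:1, 1:]"
    using d unfolding polys_upto_1 by blast
  then show ?thesis
  proof cases
    case 1
    then show ?thesis
      using m monom_mod by (intro that[of "monom 1 m"]) (simp_all add: polys_upto_def degree_monom_eq)
  next
    case 2
    have "monom 1 (m - 1) * d = monom 1 m"
      using m by (simp add: 2 x mult_monom)
    then show ?thesis
      using m monom_mod by (intro that[of "monom 1 (m - 1)"]) (simp_all add: polys_upto_def degree_monom_eq)
  next
    case 3
    have x_plus_1: "[:1, 1:] = 1 + [:0, 1::bit:]"
      by (simp add: one_pCons)
    have "monom 1 m + 1 \<in> polys_upto m"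
      using degree_add_le[of "monom (1::bit) m" m 1] by (simp add: polys_upto_def degree_monom_eq)
    moreover have "(monom 1 m + 1) * d = p1 m + monom 1 m"
      unfolding 3 p1_def x_plus_1 x by (simp add: algebra_simps mult_monom)
    then have "((monom 1 m + 1) * d) mod p1 m = monom 1 m"
      by (simp add: monom_mod)
    moreover have "coeff (monom 1 m + 1) m \<noteq> coeff (monom (1::bit) m + 1) (m - 1)"
      using m by (simp add: coeff_monom coeff_1)
    ultimately show ?thesis
      by (rule that)
  qed
qed

lemma inj_on_trunc_mult_mod_D2_rows:
  assumes m: "m \<ge> 2" and d: "d \<in> polys_upto 1" "d \<noteq> 0"
  shows "inj_on (\<lambda>r. trunc_phi m ((r * d) mod p1 m)) (D2_rows m)"
proof (rule inj_onI)
  fix r r' assume r: "r \<in> D2_rows m" "r' \<in> D2_rows m"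
    and eq: "trunc_phi m ((r * d) mod p1 m) = trunc_phi m ((r' * d) mod p1 m)"
  have m1: "m \<ge> 1" using m by simp
  note inj = inj_onD[OF inj_on_mult_mod_p1[OF m1 d]]
  let ?t = "r - r'"
  have t: "?t \<in> polys_upto m" "coeff ?t m = coeff ?t (m - 1)"
    using D2_rowsD[OF m r(1)] D2_rowsD[OF m r(2)] by (simp_all add: diff_in_polys_upto)
  have "(?t * d) mod p1 m = (r * d) mod p1 m - (r' * d) mod p1 m"
    by (simp only: left_diff_distrib poly_mod_diff_left)
  then have "trunc_phi m ((?t * d) mod p1 m) = 0"
    by (simp only: trunc_phi_diff eq diff_self)
  then have "(?t * d) mod p1 m = (0 * d) mod p1 m \<or> (?t * d) mod p1 m = monom 1 m"
    using trunc_phi_eq_0D mod_p1_in_polys_upto[OF m1] by simp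
  then show "r = r'"
  proof
    assume "(?t * d) mod p1 m = (0 * d) mod p1 m"
    then have "?t = 0"
      by (rule inj) (use t(1) in \<open>simp_all add: polys_upto_def\<close>)
    then show ?thesis by simp
  next
    assume t_monom: "(?t * d) mod p1 m = monom 1 m"
    obtain t0 where t0: "t0 \<in> polys_upto m" "(t0 * d) mod p1 m = monom 1 m"
      and t0_coeff: "coeff t0 m \<noteq> coeff t0 (m - 1)"
      using monom_preimage_mult_mod_p1[OF m d] .
    have "?t = t0"
      by (rule inj) (use t(1) t0 t_monom in simp_all)
    then show ?thesis
      using t(2) t0_coeff by simp
  qed
qed

lemma diff_matrix_D2:
  assumes m: "m \<ge> 2"
  shows "diff_matrix (D2_rows m) (polys_upto 1) (\<lambda>a b. trunc_phi m (D0 m a b)) (polys_upto (m - 1))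
           (2 ^ m) (2 ^ 2) (2 ^ m)"
proof -
  have m1: "m \<ge> 1" using m by simp
  have trunc_D0_diff: "trunc_phi m (D0 m r j) - trunc_phi m (D0 m r k) = trunc_phi m ((r * (j - k)) mod p1 m)"
    for r j k by (simp flip: trunc_phi_diff D0_diff)
  have "diff_matrix (D2_rows m) (polys_upto 1) (\<lambda>a b. trunc_phi m (D0 m a b)) (polys_upto (m - 1))
          (card (D2_rows m)) (card (polys_upto 1)) (card (polys_upto (m - 1)))"
  proof (rule diff_matrix_of_inj_on)
    fix r j k
    show "trunc_phi m (D0 m r j) \<in> polys_upto (m - 1)"
      "trunc_phi m (D0 m r j) - trunc_phi m (D0 m r k) \<in> polys_upto (m - 1)"
      unfolding trunc_D0_diff by (rule trunc_phi_in_polys_upto[OF m1])+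
  next
    fix j k assume "j \<in> polys_upto 1" "k \<in> polys_upto 1" "j \<noteq> k"
    then show "inj_on (\<lambda>r. trunc_phi m (D0 m r j) - trunc_phi m (D0 m r k)) (D2_rows m)"
      unfolding trunc_D0_diff using m
      by (intro inj_on_trunc_mult_mod_D2_rows diff_in_polys_upto) auto
  next
    show "finite (D2_rows m)"
      by (simp add: D2_rows_def)
  qed (use m in \<open>simp_all add: card_D2_rows card_polys_upto\<close>)
  then show ?thesis
    using m by (simp add: card_D2_rows card_polys_upto)
qed

theorem theorem1:
  fixes m :: nat
  assumes "m \<ge> 2" and "irreducible (p1 m)"
  shows "diff_matrix (polys_upto m) {0, 1, [:0, 1:], [:1, 1:]} (D0 m) (polys_upto m)
           (2 ^ (m + 1)) (2 ^ 2) (2 ^ (m + 1)) \<and>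
         diff_matrix
           (polys_upto (m - 2) \<union> ((\<lambda>s. monom 1 m + monom 1 (m - 1) + s) ` polys_upto (m - 2)))
           {0, 1, [:0, 1:], [:1, 1:]} (\<lambda>a b. trunc_phi m (D0 m a b)) (polys_upto (m - 1))
           (2 ^ m) (2 ^ 2) (2 ^ m)"
  using diff_matrix_D1[of m] diff_matrix_D2[of m] assms(1)
  unfolding D2_rows_def polys_upto_1 by simp

end
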